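(* Let $\rho:(0,\infty)\to(0,\infty)$ be continuous with $\int_0^\infty\rho(r)(1\wedge r^2)r^{d-1}dr<\infty$, let $\gamma(r):=\inf_{0<s\le r+1}\rho(s)$ and assume $\gamma(r)>0$ for all $r>0$. Let $\alpha_0\in(0,1)$ be such that $\int_1^\infty r^{d+\alpha_0-1}\rho(r)dr<\infty$ and $\limsup_{|x|\to\infty}\frac{\sup_{|z|\ge|x|}e^{-V(z)}}{\gamma(|x|)|x|^{\alpha_0}}=0$. Let $\phi\in C^\infty(\mathbb R^d)$ with $\phi\ge1$ and $\phi(x)=1+|x|^{\alpha_0}$ for $|x|>1$. Then $\hat L_{\rho,V}\phi$ is well defined and locally bounded, and there exist $r_0,C_1,C_2>0$ such that for all $x$, $$\hat L_{\rho,V}\phi(x)\le -C_1e^{V(x)}\gamma(|x|)\phi(x)+C_2\mathbf 1_{B(0,r_0)}(x).$$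
   Context: Let $d\ge1$. $V:\mathbb R^d\to\mathbb R$ is a locally bounded measurable function such that $e^{-V}$ is bounded and $\int e^{-V(x)}dx<\infty$. The truncated operator is $$\hat L_{\rho,V}f(x):=\frac12\int_{\{|z|>1\}}\big(f(x+z)-f(x)\big)\rho(|z|)\big(e^{V(x)-V(x+z)}+1\big)dz.$$ $B(0,r_0)$ is the open ball of radius $r_0$ centered at $0$. *)

theory Defs
  imports "HOL-Analysis.Analysis"
begin

fun Ck :: "nat \<Rightarrow> ('a::euclidean_space \<Rightarrow> real) \<Rightarrow> bool" where
  "Ck 0 f = continuous_on UNIV f"
| "Ck (Suc n) f = (\<exists>D. (\<forall>x. (f has_derivative D x) (at x)) \<and> (\<forall>v. Ck n (\<lambda>x. D x v)))"

definition smooth :: "('a::euclidean_space \<Rightarrow> real) \<Rightarrow> bool" where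
  "smooth f \<longleftrightarrow> (\<forall>n. Ck n f)"

definition gam :: "(real \<Rightarrow> real) \<Rightarrow> real \<Rightarrow> real" where
  "gam \<rho> r = Inf (\<rho> ` {0<..r+1})"

definition Lint :: "(real \<Rightarrow> real) \<Rightarrow> ('a::euclidean_space \<Rightarrow> real) \<Rightarrow> ('a \<Rightarrow> real) \<Rightarrow> 'a \<Rightarrow> 'a \<Rightarrow> real" where
  "Lint \<rho> V f x z = (f (x + z) - f x) * \<rho> (norm z) * (exp (V x - V (x + z)) + 1)"

definition hatL :: "(real \<Rightarrow> real) \<Rightarrow> ('a::euclidean_space \<Rightarrow> real) \<Rightarrow> ('a \<Rightarrow> real) \<Rightarrow> 'a \<Rightarrow> real" where
  "hatL \<rho> V f x = (1/2) * (\<integral>z\<in>{z. norm z > 1}. Lint \<rho> V f x z \<partial>lborel)"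

end

theory Submission
  imports Defs
begin

(* Outside the unit ball phi equals 1 + |x|^a, and t \<mapsto> t^a is
   a-Hoelder, so |phi(x+z) - phi(x)| \<le> K |z|^a for |z| \<ge> 1.  Together with
   sup exp(-V) < \<infinity> and the moment condition on rho (turned into an integral
   over R^d by polar coordinates), this dominates the integrand of the truncated
   operator by an integrable function of z, giving integrability and the bound
   |L phi(x)| \<le> C (exp (V x) + 1), hence local boundedness and a uniform bound
   near the origin.  For large |x| the integrand is split by the position of x+z:
   jumps outwards cost at most K |z|^a rho(|z|) (1 + exp(V x) S(x)), where S(x)
   is the supremum of exp(-V) beyond |x|; jumps inwards cost nothing; jumps into
   the unit ball gain |x|^a/2 * gamma(|x|) exp(V x) exp(-V(x+z)), whose integral
   is a fixed multiple m of exp(V x) gamma(|x|) |x|^a.  The tail hypothesis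
   makes S(x) small compared with gamma(|x|) |x|^a, so the gain dominates. *)

section \<open>Integrating radial functions\<close>

text \<open>The density of the image of Lebesgue measure on R^d under the norm, and
  its distribution function (volume of the ball of radius r).\<close>

definition radial_density :: "nat \<Rightarrow> real \<Rightarrow> real" where
  "radial_density n r = (if 0 \<le> r then real n * unit_ball_vol (real n) * r ^ (n - 1) else 0)"

definition ball_volume :: "nat \<Rightarrow> real \<Rightarrow> real" where
  "ball_volume n r = unit_ball_vol (real n) * (max r 0) ^ n"

lemma radial_density_measurable[measurable]: "radial_density n \<in> borel_measurable borel"
  unfolding radial_density_def by measurable

lemma radial_density_nonneg: "0 \<le> radial_density n r"
  by (simp add: radial_density_def)

lemma emeasure_ball_0:
  "emeasure lborel (ball (0::'a::euclidean_space) r) = ennreal (ball_volume DIM('a) r)"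
proof (cases "r \<ge> 0")
  case True
  thus ?thesis by (simp add: emeasure_ball ball_volume_def)
next
  case False
  then have "ball (0::'a) r = {}" by auto
  then have "emeasure lborel (ball (0::'a) r) = 0" by (metis emeasure_empty)
  thus ?thesis using False by (simp add: ball_volume_def power_0_left)
qed

lemma distr_norm_Ico:
  assumes "a \<le> b"
  shows "emeasure (distr lborel borel (norm::'a::euclidean_space\<Rightarrow>real)) {a..<b}
     = ennreal (ball_volume DIM('a) b - ball_volume DIM('a) a)"
proof -
  have "emeasure (distr lborel borel (norm::'a\<Rightarrow>real)) {a..<b}
      = emeasure lborel (ball (0::'a) b - ball 0 a)"
    by (subst emeasure_distr) (auto intro!: arg_cong[where f="emeasure lborel"])
  also have "\<dots> = emeasure lborel (ball (0::'a) b) - emeasure lborel (ball (0::'a) a)"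
    using assms by (intro emeasure_Diff) (auto simp: emeasure_ball_0)
  also have "\<dots> = ennreal (ball_volume DIM('a) b - ball_volume DIM('a) a)"
    by (simp add: emeasure_ball_0 ennreal_minus ball_volume_def)
  finally show ?thesis .
qed

lemma density_Ico:
  assumes "a \<le> b" and "0 < n"
  shows "emeasure (density lborel (\<lambda>r. ennreal (radial_density n r))) {a..<b}
     = ennreal (ball_volume n b - ball_volume n a)"
proof -
  define c where "c = max a 0"
  define e where "e = max b 0"
  have ce: "0 \<le> c" "c \<le> e" using assms by (auto simp: c_def e_def)
  have "emeasure (density lborel (\<lambda>r. ennreal (radial_density n r))) {a..<b}
      = (\<integral>\<^sup>+x. ennreal (radial_density n x) * indicator {a..<b} x \<partial>lborel)"
    by (subst emeasure_density) auto
  also have "\<dots> = (\<integral>\<^sup>+x. ennreal (real n * unit_ball_vol (real n) * x ^ (n - 1))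
                          * indicator {c..e} x \<partial>lborel)"
  proof (rule nn_integral_cong_AE)
    show "AE x in lborel. ennreal (radial_density n x) * indicator {a..<b} x =
       ennreal (real n * unit_ball_vol (real n) * x ^ (n - 1)) * indicator {c..e} x"
      using AE_lborel_singleton[of e]
      by eventually_elim (auto simp: radial_density_def indicator_def c_def e_def)
  qed
  also have "\<dots> = ennreal (unit_ball_vol (real n) * e ^ n - unit_ball_vol (real n) * c ^ n)"
    using ce assms
    by (intro nn_integral_FTC_Icc) (auto intro!: derivative_eq_intros simp: algebra_simps)
  also have "\<dots> = ennreal (ball_volume n b - ball_volume n a)"
    by (simp add: ball_volume_def c_def e_def)
  finally show ?thesis .
qed

lemma distr_norm_eq:
  "distr lborel borel (norm::'a::euclidean_space\<Rightarrow>real)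
     = density lborel (\<lambda>r. ennreal (radial_density DIM('a) r))"
proof (rule measure_eqI_generator_eq[where E="range (\<lambda>(a,b). {a..<b::real})" and \<Omega>=UNIV
      and A="\<lambda>i. {-real i..<real i}"])
  let ?E = "range (\<lambda>(a,b). {a..<b::real})"
  show "Int_stable ?E"
    unfolding Int_stable_def by (auto simp: image_iff)
  show "?E \<subseteq> Pow UNIV" by simp
  have sb: "sets borel = sigma_sets UNIV ?E"
    by (subst borel_eq_atLeastLessThan) (simp add: sets_measure_of)
  then show "sets (distr lborel borel (norm::'a\<Rightarrow>real)) = sigma_sets UNIV ?E"
    and "sets (density lborel (\<lambda>r. ennreal (radial_density DIM('a) r))) = sigma_sets UNIV ?E"
    by simp_all
  show "emeasure (distr lborel borel (norm::'a\<Rightarrow>real)) X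
      = emeasure (density lborel (\<lambda>r. ennreal (radial_density DIM('a) r))) X" if "X \<in> ?E" for X
  proof -
    obtain a b where X: "X = {a..<b}" using \<open>X \<in> ?E\<close> by auto
    show ?thesis
    proof (cases "a \<le> b")
      case True
      thus ?thesis unfolding X by (simp add: distr_norm_Ico density_Ico)
    qed (simp add: X)
  qed
  show "range (\<lambda>i. {-real i..<real i}) \<subseteq> ?E" by auto
  show "(\<Union>i. {-real i..<real i}) = UNIV"
  proof safe
    fix x :: real
    obtain n :: nat where "\<bar>x\<bar> < real n" using reals_Archimedean2 by blast
    thus "x \<in> (\<Union>i. {-real i..<real i})" by (auto intro!: exI[of _ n])
  qed auto
  show "emeasure (distr lborel borel (norm::'a\<Rightarrow>real)) {-real i..<real i} \<noteq> \<infinity>" for i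
    by (simp add: distr_norm_Ico)
qed

lemma nn_integral_radial:
  fixes h :: "real \<Rightarrow> ennreal"
  assumes [measurable]: "h \<in> borel_measurable borel"
  shows "(\<integral>\<^sup>+z. h (norm z) \<partial>(lborel::'a::euclidean_space measure))
       = (\<integral>\<^sup>+r. ennreal (radial_density DIM('a) r) * h r \<partial>lborel)"
proof -
  have "(\<integral>\<^sup>+z. h (norm z) \<partial>(lborel::'a measure))
      = (\<integral>\<^sup>+r. h r \<partial>distr lborel borel (norm::'a\<Rightarrow>real))"
    by (subst nn_integral_distr) auto
  also have "\<dots> = (\<integral>\<^sup>+r. ennreal (radial_density DIM('a) r) * h r \<partial>lborel)"
    unfolding distr_norm_eq by (subst nn_integral_density) auto
  finally show ?thesis .
qed

lemma integrable_radial_moment: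
  fixes \<rho> :: "real \<Rightarrow> real" and a :: real
  assumes cont: "continuous_on {1<..} \<rho>" and nonneg: "\<And>r. 1 < r \<Longrightarrow> 0 \<le> \<rho> r"
    and a: "0 \<le> a"
    and mom: "set_integrable lborel {1..} (\<lambda>r. r powr (real DIM('a) + a - 1) * \<rho> r)"
  shows "integrable (lborel::'a::euclidean_space measure)
           (\<lambda>z. indicator {1<..} (norm z) * (norm z powr a * \<rho> (norm z)))"
proof -
  define d where "d = DIM('a)"
  define g where "g r = indicator {1<..} r * (r powr a * \<rho> r)" for r
  define m where "m r = indicator {1..} r * (r powr (real d + a - 1) * \<rho> r)" for r
  define c where "c = real d * unit_ball_vol (real d)"
  have "continuous_on {1<..} (\<lambda>r. r powr a * \<rho> r)"
    using cont by (intro continuous_intros) auto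
  then have [measurable]: "g \<in> borel_measurable borel"
    using borel_measurable_continuous_on_indicator[of "{1<..}" "\<lambda>r. r powr a * \<rho> r"]
    unfolding g_def by simp
  have g_nonneg: "0 \<le> g r" for r
    using nonneg[of r] by (auto simp: g_def indicator_def)
  have m_int: "integrable lborel m"
    using mom unfolding set_integrable_def m_def d_def by simp
  have radial_le: "ennreal (radial_density d r) * ennreal (g r) \<le> ennreal c * ennreal (m r)" for r
  proof (cases "r > 1")
    case True
    have "0 < d" by (simp add: d_def)
    then have exponent: "real d + a - 1 = real (d - 1) + a" by (simp add: of_nat_diff)
    have "r ^ (d - 1) * r powr a = r powr (real d + a - 1)"
      unfolding exponent using True by (simp add: powr_realpow[symmetric] powr_add)
    then have "radial_density d r * g r = c * m r"
      using True by (simp add: radial_density_def g_def m_def c_def algebra_simps)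
    moreover have "0 \<le> c" by (simp add: c_def)
    ultimately show ?thesis by (metis ennreal_mult' radial_density_nonneg order_refl)
  next
    case False
    thus ?thesis by (simp add: g_def m_def)
  qed
  have "(\<integral>\<^sup>+z. ennreal (g (norm z)) \<partial>(lborel::'a measure))
      = (\<integral>\<^sup>+r. ennreal (radial_density d r) * ennreal (g r) \<partial>lborel)"
    unfolding d_def by (rule nn_integral_radial) simp
  also have "\<dots> \<le> (\<integral>\<^sup>+r. ennreal c * ennreal (m r) \<partial>lborel)"
    by (intro nn_integral_mono radial_le)
  also have "\<dots> = ennreal c * (\<integral>\<^sup>+r. ennreal (m r) \<partial>lborel)"
    using borel_measurable_integrable[OF m_int] by (simp add: nn_integral_cmult)
  also have "\<dots> < \<infinity>"
  proof -
    have "(\<integral>\<^sup>+r. ennreal (m r) \<partial>lborel) \<le> (\<integral>\<^sup>+r. ennreal (norm (m r)) \<partial>lborel)"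
      by (intro nn_integral_mono) (simp add: ennreal_leI)
    also have "\<dots> < \<infinity>" using m_int by (simp add: integrable_iff_bounded)
    finally show ?thesis by (simp add: ennreal_mult_less_top)
  qed
  finally have "(\<integral>\<^sup>+z. ennreal (g (norm z)) \<partial>(lborel::'a measure)) < \<infinity>" .
  then have "integrable (lborel::'a measure) (\<lambda>z. g (norm z))"
    by (intro integrableI_nonneg) (auto simp: g_nonneg)
  thus ?thesis unfolding g_def .
qed

lemma powr_subadd:
  fixes t s a :: real
  assumes "0 \<le> t" "0 \<le> s" "0 < a" "a \<le> 1"
  shows "(t + s) powr a \<le> t powr a + s powr a"
proof (cases "t + s = 0")
  case True
  thus ?thesis using assms by simp
next
  case False
  then have p: "t + s > 0" using assms by simp
  have t: "t / (t+s) \<le> (t/(t+s)) powr a"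
    using powr_mono'[of a 1 "t/(t+s)"] assms p by simp
  have s: "s / (t+s) \<le> (s/(t+s)) powr a"
    using powr_mono'[of a 1 "s/(t+s)"] assms p by simp
  have "1 = t/(t+s) + s/(t+s)" using p by (simp add: add_divide_distrib[symmetric])
  also have "\<dots> \<le> (t powr a + s powr a) / (t+s) powr a"
    using t s by (simp add: powr_divide add_divide_distrib assms)
  finally show ?thesis using p by (simp add: le_divide_eq)
qed

lemma powr_norm_diff:
  fixes x z :: "'a::real_normed_vector"
  assumes "0 < a" "a \<le> 1"
  shows "\<bar>norm (x + z) powr a - norm x powr a\<bar> \<le> norm z powr a"
proof -
  have key: "u powr a \<le> v powr a + \<bar>u - v\<bar> powr a" if "0 \<le> u" "0 \<le> v" for u v :: real
  proof -
    have "u powr a \<le> (v + \<bar>u - v\<bar>) powr a" using that assms by (intro powr_mono2) auto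
    also have "\<dots> \<le> v powr a + \<bar>u - v\<bar> powr a" using that assms by (intro powr_subadd) auto
    finally show ?thesis .
  qed
  have "\<bar>norm (x + z) - norm x\<bar> powr a \<le> norm z powr a"
    using norm_triangle_ineq3[of "x + z" x] assms by (intro powr_mono2) auto
  thus ?thesis
    using key[of "norm (x+z)" "norm x"] key[of "norm x" "norm (x+z)"] by (auto simp: abs_minus_commute)
qed

lemma locally_bounded_compact:
  fixes f :: "'a::metric_space \<Rightarrow> real"
  assumes "\<forall>x. \<exists>e>0. bounded (f ` ball x e)" "compact K"
  shows "bounded (f ` K)"
proof -
  from assms(1) obtain e where e: "\<And>x. e x > 0 \<and> bounded (f ` ball x (e x))" by metis
  have "K \<subseteq> (\<Union>c\<in>K. ball c (e c))" using e by force
  then obtain C where C: "C \<subseteq> K" "finite C" "K \<subseteq> (\<Union>c\<in>C. ball c (e c))"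
    using compactE_image[OF assms(2), of K "\<lambda>c. ball c (e c)"] by auto
  have "f ` K \<subseteq> (\<Union>c\<in>C. f ` ball c (e c))" using C(3) by blast
  moreover have "bounded (\<Union>c\<in>C. f ` ball c (e c))" using C(2) e by auto
  ultimately show ?thesis using bounded_subset by blast
qed

lemma Limsup_zero_eventually_less:
  fixes f :: "'a::real_normed_vector \<Rightarrow> real"
  assumes "Limsup at_infinity (\<lambda>x. ereal (f x)) = 0" "0 < \<delta>"
  obtains b where "\<And>x. b \<le> norm x \<Longrightarrow> f x < \<delta>"
proof -
  have "Limsup at_infinity (\<lambda>x. ereal (f x)) < ereal \<delta>" using assms by simp
  from Limsup_lessD[OF this] obtain b where "\<forall>x. b \<le> norm x \<longrightarrow> f x < \<delta>"
    unfolding eventually_at_infinity by auto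
  thus ?thesis using that by blast
qed

text \<open>The arithmetic closing the large-|x| estimate: if the loss is at most
  k (s + 1) with 1 \<le> s \<le> P m / (8 (k + 1)), it is beaten by the gain P m / 2.\<close>

lemma gain_beats_loss:
  fixes J k s P m :: real
  assumes "0 \<le> k" "0 < P" "0 < m" "1 \<le> s" "s \<le> P * m / (8 * (k + 1))"
    and "J \<le> k * (s + 1) - P * m / 2"
  shows "J \<le> - (P * m / 4)"
proof -
  have "k * s \<le> k * (P * m / (8 * (k + 1)))" using assms by (intro mult_left_mono) auto
  also have "\<dots> \<le> P * m / 8" using assms by (simp add: field_simps)
  finally have ks: "k * s \<le> P * m / 8" .
  have "8 * (k + 1) * 1 \<le> 8 * (k + 1) * s" using assms by (intro mult_left_mono) auto
  also have "\<dots> \<le> P * m" using assms by (simp add: field_simps)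
  finally have "k \<le> P * m / 8" by simp
  thus ?thesis using ks assms(6) by (simp add: algebra_simps)
qed

lemma gam_le:
  assumes "\<And>r. 0 < r \<Longrightarrow> 0 \<le> \<rho> r" "0 < r" "r \<le> t + 1"
  shows "gam \<rho> t \<le> \<rho> r"
  unfolding gam_def by (rule cInf_lower) (use assms in \<open>auto intro!: bdd_belowI2[of _ 0]\<close>)

lemma gam_nonneg:
  assumes "\<And>r. 0 < r \<Longrightarrow> 0 \<le> \<rho> r" "0 \<le> t"
  shows "0 \<le> gam \<rho> t"
  unfolding gam_def by (rule cInf_greatest) (use assms in auto)

section \<open>Estimates for the truncated operator\<close>

locale lyapunov_setting =
  fixes \<rho> :: "real \<Rightarrow> real" and V :: "'a::euclidean_space \<Rightarrow> real"
    and \<phi> :: "'a \<Rightarrow> real" and a :: real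
  assumes V_measurable: "V \<in> borel_measurable borel"
    and V_locbdd: "\<forall>x. \<exists>e>0. bounded (V ` ball x e)"
    and expV_bdd: "bounded (range (\<lambda>x. exp (- V x)))"
    and expV_int: "integrable lborel (\<lambda>x. exp (- V x))"
    and rho_cont: "continuous_on {0<..} \<rho>"
    and rho_pos: "\<And>r. 0 < r \<Longrightarrow> 0 < \<rho> r"
    and a_pos: "0 < a" and a_le_1: "a \<le> 1"
    and rho_mom: "set_integrable lborel {1..} (\<lambda>r. r powr (real DIM('a) + a - 1) * \<rho> r)"
    and phi_cont: "continuous_on UNIV \<phi>"
    and phi_ge_1: "\<And>x. 1 \<le> \<phi> x"
    and phi_eq: "\<And>x. 1 < norm x \<Longrightarrow> \<phi> x = 1 + norm x powr a"
begin

declare V_measurable[measurable]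

lemma phi_measurable[measurable]: "\<phi> \<in> borel_measurable borel"
  using phi_cont by (rule borel_measurable_continuous_onI)

lemma rho_nonneg: "0 < r \<Longrightarrow> 0 \<le> \<rho> r"
  using rho_pos by (simp add: less_imp_le)

definition phi_max :: real where
  "phi_max = Sup (\<phi> ` cball 0 1)"

lemma phi_le_phi_max: "norm y \<le> 1 \<Longrightarrow> \<phi> y \<le> phi_max"
proof -
  have "bounded (\<phi> ` cball 0 1)"
    by (intro compact_imp_bounded compact_continuous_image continuous_on_subset[OF phi_cont]) auto
  moreover assume "norm y \<le> 1"
  ultimately show ?thesis
    unfolding phi_max_def by (intro cSup_upper bounded_imp_bdd_above) auto
qed

lemma phi_max_ge_1: "1 \<le> phi_max"
  using phi_le_phi_max[of 0] phi_ge_1[of 0] by simp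

lemma phi_le: "\<phi> y \<le> phi_max + norm y powr a"
proof (cases "norm y \<le> 1")
  case True
  thus ?thesis using phi_le_phi_max[of y] powr_ge_zero[of "norm y" a] by linarith
qed (use phi_eq phi_max_ge_1 in auto)

text \<open>phi stays within a bounded distance of the profile 1 + |y|^a, so its
  increments over jumps of length at least 1 are of order |z|^a.\<close>

lemma phi_near_profile: "\<bar>\<phi> y - (1 + norm y powr a)\<bar> \<le> phi_max + 2"
proof (cases "norm y > 1")
  case False
  then have "norm y powr a \<le> 1" using a_pos by (simp add: powr_le1)
  moreover have "0 \<le> norm y powr a" by simp
  ultimately show ?thesis using phi_le_phi_max[of y] phi_ge_1[of y] phi_max_ge_1 False
    by (intro abs_leI) linarith+
qed (use phi_eq phi_max_ge_1 in auto)

definition incr_const :: real where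
  "incr_const = 2 * phi_max + 5"

lemma incr_const_pos: "0 < incr_const"
  using phi_max_ge_1 by (simp add: incr_const_def)

lemma phi_increment:
  assumes "1 \<le> norm z"
  shows "\<bar>\<phi> (x + z) - \<phi> x\<bar> \<le> incr_const * norm z powr a"
proof -
  have z: "1 \<le> norm z powr a" using assms a_pos by (simp add: ge_one_powr_ge_zero)
  have "\<bar>\<phi> (x + z) - \<phi> x\<bar> \<le> 2 * (phi_max + 2) + \<bar>norm (x+z) powr a - norm x powr a\<bar>"
    using phi_near_profile[of "x+z"] phi_near_profile[of x] by (simp add: abs_le_iff) linarith
  also have "\<dots> \<le> 2 * (phi_max + 2) + norm z powr a"
    using powr_norm_diff[OF a_pos a_le_1, of x z] by simp
  also have "\<dots> \<le> 2 * (phi_max + 2) * norm z powr a + norm z powr a"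
    using z phi_max_ge_1 mult_left_mono[OF z, of "2 * (phi_max + 2)"] by simp
  finally show ?thesis by (simp add: incr_const_def algebra_simps)
qed

lemma phi_inward:
  assumes "2 * phi_max \<le> norm x powr a" "1 < norm x" "norm y < norm x"
  shows "\<phi> y \<le> \<phi> x"
proof (cases "1 < norm y")
  case True
  thus ?thesis using assms a_pos by (simp add: phi_eq powr_mono2)
next
  case False
  thus ?thesis using phi_le_phi_max[of y] phi_max_ge_1 assms by (simp add: phi_eq)
qed

definition expV_max :: real where
  "expV_max = Sup (range (\<lambda>x. exp (- V x)))"

lemma expV_le_max: "exp (- V y) \<le> expV_max"
  unfolding expV_max_def using expV_bdd by (intro cSup_upper bounded_imp_bdd_above) auto

lemma expV_max_pos: "0 < expV_max"
  using expV_le_max[of 0] exp_gt_zero[of "- V 0"] by linarith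

definition moment_dens :: "'a \<Rightarrow> real" where
  "moment_dens z = indicator {1<..} (norm z) * (norm z powr a * \<rho> (norm z))"

definition moment :: real where
  "moment = integral\<^sup>L lborel moment_dens"

lemma moment_dens_integrable: "integrable lborel moment_dens"
  unfolding moment_dens_def[abs_def]
  using rho_cont a_pos rho_mom
  by (intro integrable_radial_moment) (auto intro: continuous_on_subset rho_nonneg)

lemma moment_dens_nonneg: "0 \<le> moment_dens z"
proof (cases "1 < norm z")
  case True
  then have "0 \<le> \<rho> (norm z)" by (intro rho_nonneg) linarith
  thus ?thesis by (simp add: moment_dens_def)
qed (simp add: moment_dens_def)

lemma moment_nonneg: "0 \<le> moment"
  unfolding moment_def by (simp add: moment_dens_nonneg)

definition Ltrunc :: "'a \<Rightarrow> 'a \<Rightarrow> real" where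
  "Ltrunc x z = indicator {z. 1 < norm z} z * Lint \<rho> V \<phi> x z"

lemma Ltrunc_measurable: "Ltrunc x \<in> borel_measurable lborel"
proof -
  have "(\<lambda>r. indicator {1<..} r * \<rho> r) \<in> borel_measurable borel"
    using borel_measurable_continuous_on_indicator[of "{1<..}" \<rho>]
      continuous_on_subset[OF rho_cont, of "{1<..}"] by auto
  then have "(\<lambda>z. (\<phi> (x + z) - \<phi> x) * (indicator {1<..} (norm z) * \<rho> (norm z))
                  * (exp (V x - V (x + z)) + 1)) \<in> borel_measurable lborel"
    by measurable
  also have "(\<lambda>z. (\<phi> (x + z) - \<phi> x) * (indicator {1<..} (norm z) * \<rho> (norm z))
                  * (exp (V x - V (x + z)) + 1)) = Ltrunc x"
    by (auto simp: Ltrunc_def Lint_def indicator_def fun_eq_iff)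
  finally show ?thesis .
qed

lemma Ltrunc_bound:
  "\<bar>Ltrunc x z\<bar> \<le> incr_const * (exp (V x) * expV_max + 1) * moment_dens z"
proof (cases "1 < norm z")
  case True
  have "exp (V x - V (x + z)) = exp (V x) * exp (- V (x + z))" by (simp add: exp_add[symmetric])
  also have "\<dots> \<le> exp (V x) * expV_max" using expV_le_max by simp
  finally have w: "\<bar>exp (V x - V (x + z)) + 1\<bar> \<le> exp (V x) * expV_max + 1"
    by (simp add: add_pos_nonneg)
  have r: "0 \<le> \<rho> (norm z)" using True by (intro rho_nonneg) linarith
  have "\<bar>Ltrunc x z\<bar> = \<bar>\<phi> (x + z) - \<phi> x\<bar> * \<rho> (norm z) * \<bar>exp (V x - V (x + z)) + 1\<bar>"
    using True r by (simp add: Ltrunc_def Lint_def abs_mult)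
  also have "\<dots> \<le> (incr_const * norm z powr a) * \<rho> (norm z) * (exp (V x) * expV_max + 1)"
    using phi_increment[of z x] True r w by (intro mult_mono) auto
  also have "\<dots> = incr_const * (exp (V x) * expV_max + 1) * moment_dens z"
    using True by (simp add: moment_dens_def)
  finally show ?thesis .
qed (simp add: Ltrunc_def moment_dens_def)

lemma Ltrunc_integrable: "integrable lborel (Ltrunc x)"
  by (rule Bochner_Integration.integrable_bound[OF integrable_mult_right[OF
        moment_dens_integrable, of "incr_const * (exp (V x) * expV_max + 1)"] Ltrunc_measurable])
     (use Ltrunc_bound moment_dens_nonneg incr_const_pos expV_max_pos in \<open>auto simp: abs_mult\<close>)

lemma hatL_eq: "hatL \<rho> V \<phi> x = 1/2 * integral\<^sup>L lborel (Ltrunc x)"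
  by (simp add: hatL_def set_lebesgue_integral_def Ltrunc_def[abs_def])

lemma hatL_abs_bound:
  assumes "V x \<le> B"
  shows "\<bar>hatL \<rho> V \<phi> x\<bar> \<le> 1/2 * (incr_const * (exp B * expV_max + 1) * moment)"
proof -
  have "\<bar>integral\<^sup>L lborel (Ltrunc x)\<bar>
      \<le> integral\<^sup>L lborel (\<lambda>z. incr_const * (exp (V x) * expV_max + 1) * moment_dens z)"
    by (rule integral_abs_bound_integral[OF Ltrunc_integrable]) 
       (use moment_dens_integrable Ltrunc_bound in auto)
  also have "\<dots> = incr_const * (exp (V x) * expV_max + 1) * moment"
    by (simp add: moment_def)
  also have "\<dots> \<le> incr_const * (exp B * expV_max + 1) * moment"
    using assms incr_const_pos expV_max_pos moment_nonneg
    by (intro mult_right_mono mult_left_mono) auto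
  finally show ?thesis unfolding hatL_eq by simp
qed

lemma hatL_locally_bounded: "\<exists>e>0. bounded (hatL \<rho> V \<phi> ` ball x e)"
proof -
  obtain e B where e: "0 < e" and B: "\<forall>u\<in>V ` ball x e. norm u \<le> B"
    using V_locbdd unfolding bounded_iff by blast
  have "\<forall>y\<in>ball x e. \<bar>hatL \<rho> V \<phi> y\<bar> \<le> 1/2 * (incr_const * (exp B * expV_max + 1) * moment)"
  proof
    fix y assume "y \<in> ball x e"
    then have "norm (V y) \<le> B" using B by blast
    then have "V y \<le> B" by (simp add: abs_le_iff)
    thus "\<bar>hatL \<rho> V \<phi> y\<bar> \<le> 1/2 * (incr_const * (exp B * expV_max + 1) * moment)"
      by (rule hatL_abs_bound)
  qed
  then have "bounded (hatL \<rho> V \<phi> ` ball x e)" unfolding bounded_iff real_norm_def by blast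
  thus ?thesis using e by blast
qed

definition core_dens :: "'a \<Rightarrow> real" where
  "core_dens y = indicator (ball 0 1) y * exp (- V y)"

definition core_mass :: real where
  "core_mass = integral\<^sup>L lborel core_dens"

lemma core_dens_integrable: "integrable lborel core_dens"
  using integrable_mult_indicator[OF _ expV_int, of "ball 0 1"]
  by (simp add: core_dens_def[abs_def])

text \<open>V is bounded on the closed unit ball, so exp(-V) has positive mass there.\<close>

lemma core_mass_pos: "0 < core_mass"
proof -
  obtain B where B: "\<forall>u\<in>V ` cball 0 1. norm u \<le> B"
    using locally_bounded_compact[OF V_locbdd compact_cball] unfolding bounded_iff by blast
  have lower: "exp (- B) * indicator (ball (0::'a) 1) y \<le> core_dens y" for y
  proof (cases "y \<in> ball 0 1")
    case True
    then have "\<bar>V y\<bar> \<le> B" using B by fastforce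
    thus ?thesis using True by (simp add: core_dens_def)
  qed (simp add: core_dens_def)
  have "0 < exp (- B) * measure lborel (ball (0::'a) 1)"
    by (simp add: content_ball_pos)
  also have "\<dots> = integral\<^sup>L lborel (\<lambda>y. exp (- B) * indicator (ball (0::'a) 1) y)"
    by simp
  also have "\<dots> \<le> core_mass"
    unfolding core_mass_def using core_dens_integrable lower
    by (intro integral_mono) (auto simp: emeasure_ball_0 intro!: integrable_mult_right)
  finally show ?thesis .
qed

text \<open>By translation invariance of Lebesgue measure, every point x sees the
  same mass of exp(-V) in the unit ball when integrating over jumps z.\<close>

lemma core_dens_translate:
  "integrable lborel (\<lambda>z. core_dens (x + z))" "integral\<^sup>L lborel (\<lambda>z. core_dens (x + z)) = core_mass"
proof -
  have [measurable]: "core_dens \<in> borel_measurable borel"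
    using borel_measurable_integrable[OF core_dens_integrable] by simp
  have D: "distr lborel borel ((+) x) = lborel" by (rule lborel_distr_plus)
  show "integrable lborel (\<lambda>z. core_dens (x + z))"
    using integrable_distr_eq[of "(+) x" lborel borel core_dens] core_dens_integrable
    by (simp add: D)
  show "integral\<^sup>L lborel (\<lambda>z. core_dens (x + z)) = core_mass"
    using integral_distr[of "(+) x" lborel borel core_dens] by (simp add: D core_mass_def)
qed

subsection \<open>The drift far from the origin\<close>

definition tail_sup :: "'a \<Rightarrow> real" where
  "tail_sup x = (SUP z\<in>{z. norm z \<ge> norm x}. exp (- V z))"

lemma tail_sup_ge: "norm x \<le> norm y \<Longrightarrow> exp (- V y) \<le> tail_sup x"
  unfolding tail_sup_def using expV_le_max by (intro cSUP_upper bdd_aboveI2) auto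

lemma Ltrunc_outward:
  assumes "norm x \<le> norm (x + z)"
  shows "Ltrunc x z \<le> incr_const * (exp (V x) * tail_sup x + 1) * moment_dens z"
proof (cases "1 < norm z")
  case True
  have r: "0 \<le> \<rho> (norm z)" using True by (intro rho_nonneg) linarith
  have "exp (V x - V (x + z)) = exp (V x) * exp (- V (x + z))" by (simp add: exp_add[symmetric])
  also have "\<dots> \<le> exp (V x) * tail_sup x" using tail_sup_ge[OF assms] by simp
  finally have w: "exp (V x - V (x + z)) + 1 \<le> exp (V x) * tail_sup x + 1" by simp
  have "Ltrunc x z = (\<phi> (x + z) - \<phi> x) * \<rho> (norm z) * (exp (V x - V (x + z)) + 1)"
    using True by (simp add: Ltrunc_def Lint_def)
  also have "\<dots> \<le> (incr_const * norm z powr a) * \<rho> (norm z) * (exp (V x) * tail_sup x + 1)"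
    using abs_le_D1[OF phi_increment[of z x]] True r w incr_const_pos
    by (intro mult_mono) (auto simp: add_pos_nonneg less_imp_le)
  also have "\<dots> = incr_const * (exp (V x) * tail_sup x + 1) * moment_dens z"
    using True by (simp add: moment_dens_def)
  finally show ?thesis .
qed (simp add: Ltrunc_def moment_dens_def)

text \<open>Jumps towards the origin do not increase phi, hence cost nothing.\<close>

lemma Ltrunc_inward:
  assumes "2 * phi_max \<le> norm x powr a" "1 < norm x" "norm (x + z) < norm x"
  shows "Ltrunc x z \<le> 0"
proof (cases "1 < norm z")
  case True
  have r: "0 \<le> \<rho> (norm z)" using True by (intro rho_nonneg) linarith
  have "\<phi> (x + z) - \<phi> x \<le> 0" using phi_inward[OF assms] by simp
  then have "(\<phi> (x + z) - \<phi> x) * \<rho> (norm z) * (exp (V x - V (x + z)) + 1) \<le> 0"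
    using r by (intro mult_nonpos_nonneg) (auto simp: mult_nonpos_nonneg add_pos_nonneg less_imp_le)
  thus ?thesis using True by (simp add: Ltrunc_def Lint_def)
qed (simp add: Ltrunc_def)

text \<open>Jumps into the unit ball gain at least |x|^a/2 * gamma(|x|), weighted by
  exp(V(x) - V(x+z)): this is where the drift comes from.\<close>

lemma Ltrunc_into_core:
  assumes "2 * phi_max \<le> norm x powr a" "1 < norm x" "1 < norm z" "norm (x + z) < 1"
  shows "Ltrunc x z \<le> - (exp (V x) * (norm x powr a / 2) * gam \<rho> (norm x)) * exp (- V (x + z))"
proof -
  define D where "D = \<phi> (x + z) - \<phi> x"
  have r: "0 \<le> \<rho> (norm z)" using assms by (intro rho_nonneg) linarith
  have "D \<le> phi_max - (1 + norm x powr a)"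
    using phi_le_phi_max[of "x + z"] phi_eq[OF assms(2)] assms(4) by (simp add: D_def)
  then have D: "D \<le> - (norm x powr a / 2)" using assms(1) by simp
  have "norm z \<le> norm (x + z) + norm x" using norm_triangle_ineq4[of "x + z" x] by simp
  then have "gam \<rho> (norm x) \<le> \<rho> (norm z)"
    using assms by (intro gam_le rho_nonneg) auto
  then have "- (norm x powr a / 2) * \<rho> (norm z) \<le> - (norm x powr a / 2) * gam \<rho> (norm x)"
    by (simp add: mult_left_mono)
  moreover have Drho: "D * \<rho> (norm z) \<le> - (norm x powr a / 2) * \<rho> (norm z)"
    using D r by (rule mult_right_mono)
  ultimately have Dr: "D * \<rho> (norm z) \<le> - (norm x powr a / 2) * gam \<rho> (norm x)"
    by linarith
  have "0 \<le> norm x powr a / 2 * \<rho> (norm z)" using r by simp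
  then have Dr0: "D * \<rho> (norm z) \<le> 0" using Drho by linarith
  have ev: "0 < exp (V x) * exp (- V (x + z))" by simp
  have "Ltrunc x z = D * \<rho> (norm z) * (exp (V x) * exp (- V (x + z))) + D * \<rho> (norm z)"
    using assms(3) by (simp add: Ltrunc_def Lint_def D_def exp_add[symmetric] algebra_simps)
  also have "\<dots> \<le> D * \<rho> (norm z) * (exp (V x) * exp (- V (x + z)))" using Dr0 by simp
  also have "\<dots> \<le> - (norm x powr a / 2) * gam \<rho> (norm x) * (exp (V x) * exp (- V (x + z)))"
    using Dr ev by (intro mult_right_mono) auto
  finally show ?thesis by (simp add: algebra_simps)
qed

text \<open>Combining the three cases: a pointwise bound whose integral over z is
  explicit, the positive part being integrable and the gain a translate of core_dens.\<close>

lemma Ltrunc_far_bound: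
  assumes "2 * phi_max \<le> norm x powr a" "2 \<le> norm x"
  shows "Ltrunc x z \<le> incr_const * (exp (V x) * tail_sup x + 1) * moment_dens z
           - exp (V x) * (norm x powr a / 2) * gam \<rho> (norm x) * core_dens (x + z)"
proof -
  have "0 < tail_sup x" using tail_sup_ge[of x x] exp_gt_zero[of "- V x"] by linarith
  then have c1: "0 \<le> incr_const * (exp (V x) * tail_sup x + 1) * moment_dens z"
    using incr_const_pos moment_dens_nonneg[of z] by (simp add: add_pos_nonneg less_imp_le)
  consider "norm x \<le> norm (x + z)" | "norm (x + z) < 1" | "1 \<le> norm (x + z)" "norm (x + z) < norm x"
    by linarith
  thus ?thesis
  proof cases
    case 1
    thus ?thesis using Ltrunc_outward[OF 1] assms by (simp add: core_dens_def)
  next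
    case 2
    have "norm x \<le> norm (x + z) + norm z" using norm_triangle_ineq4[of "x + z" z] by simp
    then have "1 < norm z" using 2 assms by linarith
    thus ?thesis using Ltrunc_into_core[OF assms(1) _ _ 2] 2 c1 assms by (simp add: core_dens_def)
  next
    case 3
    thus ?thesis using Ltrunc_inward[OF assms(1) _ 3(2)] c1 assms by (simp add: core_dens_def)
  qed
qed

lemma integral_Ltrunc_far:
  assumes "2 * phi_max \<le> norm x powr a" "2 \<le> norm x"
  shows "integral\<^sup>L lborel (Ltrunc x) \<le> incr_const * (exp (V x) * tail_sup x + 1) * moment
           - exp (V x) * (norm x powr a / 2) * gam \<rho> (norm x) * core_mass"
proof -
  have "integral\<^sup>L lborel (Ltrunc x) \<le> integral\<^sup>L lborel (\<lambda>z.
          incr_const * (exp (V x) * tail_sup x + 1) * moment_dens z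
          - exp (V x) * (norm x powr a / 2) * gam \<rho> (norm x) * core_dens (x + z))"
    using Ltrunc_far_bound[OF assms] moment_dens_integrable core_dens_translate(1)
    by (intro integral_mono Ltrunc_integrable) auto
  also have "\<dots> = incr_const * (exp (V x) * tail_sup x + 1) * moment
           - exp (V x) * (norm x powr a / 2) * gam \<rho> (norm x) * core_mass"
    using moment_dens_integrable core_dens_translate by (simp add: moment_def)
  finally show ?thesis .
qed

text \<open>The level below which tail_sup x / (gamma(|x|) |x|^a) must eventually stay.\<close>

definition tail_eps :: real where
  "tail_eps = core_mass / (8 * (incr_const * moment + 1))"

lemma tail_eps_pos: "0 < tail_eps"
proof -
  have "0 \<le> incr_const * moment" using incr_const_pos moment_nonneg by simp
  thus ?thesis using core_mass_pos by (simp add: tail_eps_def)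
qed

lemma hatL_far:
  assumes "2 * phi_max \<le> norm x powr a" "2 \<le> norm x" "0 < gam \<rho> (norm x)"
    and tail: "tail_sup x / (gam \<rho> (norm x) * norm x powr a) < tail_eps"
  shows "hatL \<rho> V \<phi> x \<le> - (core_mass / 16) * exp (V x) * gam \<rho> (norm x) * \<phi> x"
proof -
  define X where "X = norm x powr a"
  define P where "P = exp (V x) * gam \<rho> (norm x) * X"
  have X: "2 \<le> X" using assms(1) phi_max_ge_1 by (simp add: X_def)
  have P: "0 < P" using X assms(3) by (simp add: P_def)
  have "1 = exp (V x) * exp (- V x)" by (simp add: exp_minus)
  also have "\<dots> \<le> exp (V x) * tail_sup x" using tail_sup_ge[of x x] by simp
  finally have s1: "1 \<le> exp (V x) * tail_sup x" .
  have "0 < gam \<rho> (norm x) * X" using X assms(3) by simp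
  then have "tail_sup x \<le> tail_eps * (gam \<rho> (norm x) * X)"
    using tail by (simp add: X_def pos_divide_less_eq)
  then have "exp (V x) * tail_sup x \<le> exp (V x) * (tail_eps * (gam \<rho> (norm x) * X))"
    by (rule mult_left_mono) simp
  then have "exp (V x) * tail_sup x \<le> P * tail_eps" by (simp add: P_def algebra_simps)
  then have s2: "exp (V x) * tail_sup x \<le> P * core_mass / (8 * (incr_const * moment + 1))"
    by (simp add: tail_eps_def)
  have "integral\<^sup>L lborel (Ltrunc x) \<le> incr_const * moment * (exp (V x) * tail_sup x + 1) - P * core_mass / 2"
    using integral_Ltrunc_far[OF assms(1,2)] by (simp add: P_def X_def algebra_simps)
  then have "integral\<^sup>L lborel (Ltrunc x) \<le> - (P * core_mass / 4)"
    using incr_const_pos moment_nonneg P core_mass_pos s1 s2 by (intro gain_beats_loss) auto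
  moreover have "(core_mass / 16) * exp (V x) * gam \<rho> (norm x) * \<phi> x \<le> P * core_mass / 8"
  proof -
    have "\<phi> x \<le> 2 * X" using phi_eq[of x] X assms(2) by (simp add: X_def)
    then have "(core_mass / 16) * (exp (V x) * gam \<rho> (norm x)) * \<phi> x
             \<le> (core_mass / 16) * (exp (V x) * gam \<rho> (norm x)) * (2 * X)"
      using core_mass_pos assms(3) by (intro mult_left_mono) auto
    thus ?thesis by (simp add: P_def algebra_simps)
  qed
  ultimately show ?thesis unfolding hatL_eq by simp
qed

subsection \<open>The bound near the origin\<close>

text \<open>On any ball around the origin the drift bound holds up to an additive
  constant, since V and hence L phi are bounded there.\<close>

lemma hatL_near_origin:
  assumes "0 \<le> C1"
  obtains C2 where "0 < C2"
    "\<And>x. x \<in> ball 0 r \<Longrightarrow> hatL \<rho> V \<phi> x \<le> - C1 * exp (V x) * gam \<rho> (norm x) * \<phi> x + C2"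
proof -
  obtain B where B: "\<forall>u\<in>V ` cball 0 r. norm u \<le> B"
    using locally_bounded_compact[OF V_locbdd compact_cball] unfolding bounded_iff by blast
  define hb where "hb = 1/2 * (incr_const * (exp B * expV_max + 1) * moment)"
  define C2 where "C2 = hb + C1 * (exp B * \<rho> 1 * (phi_max + r powr a)) + 1"
  have hb: "0 \<le> hb"
    using incr_const_pos expV_max_pos moment_nonneg by (simp add: hb_def)
  have "0 \<le> C1 * (exp B * \<rho> 1 * (phi_max + r powr a))"
    using assms rho_pos[of 1] phi_max_ge_1 by simp
  then have "0 < C2" using hb by (simp add: C2_def)
  moreover have "hatL \<rho> V \<phi> x \<le> - C1 * exp (V x) * gam \<rho> (norm x) * \<phi> x + C2"
    if x: "x \<in> ball 0 r" for x
  proof -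
    have "norm (V x) \<le> B" using B x by auto
    then have V: "V x \<le> B" by (simp add: abs_le_iff)
    have "hatL \<rho> V \<phi> x \<le> hb" using hatL_abs_bound[OF V] by (simp add: hb_def)
    moreover have "exp (V x) * gam \<rho> (norm x) * \<phi> x \<le> exp B * \<rho> 1 * (phi_max + r powr a)"
    proof (intro mult_mono)
      show "\<phi> x \<le> phi_max + r powr a"
        using phi_le[of x] powr_mono2[of a "norm x" r] x a_pos by simp
      show "gam \<rho> (norm x) \<le> \<rho> 1" by (intro gam_le rho_nonneg) auto
    qed (use V gam_nonneg[OF rho_nonneg] phi_ge_1[of x] rho_pos[of 1] in auto)
    then have "C1 * (exp (V x) * gam \<rho> (norm x) * \<phi> x) \<le> C1 * (exp B * \<rho> 1 * (phi_max + r powr a))"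
      using assms by (rule mult_left_mono)
    ultimately show ?thesis by (simp add: C2_def algebra_simps)
  qed
  ultimately show ?thesis using that by blast
qed

lemma Lint_set_integrable: "set_integrable lborel {z. 1 < norm z} (Lint \<rho> V \<phi> x)"
  using Ltrunc_integrable[of x] by (simp add: set_integrable_def Ltrunc_def[abs_def])

end

theorem lemma4p3:
  fixes V :: "'a::euclidean_space \<Rightarrow> real" and \<rho> :: "real \<Rightarrow> real"
    and \<phi> :: "'a \<Rightarrow> real" and \<alpha>0 :: real
  assumes V_meas: "V \<in> borel_measurable lborel"
    and V_locbdd: "\<forall>x. \<exists>e>0. bounded (V ` ball x e)"
    and expV_bdd: "bounded (range (\<lambda>x. exp (- V x)))"
    and expV_int: "integrable lborel (\<lambda>x. exp (- V x))"
    and rho_cont: "continuous_on {0<..} \<rho>"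
    and rho_pos: "\<forall>r>0. \<rho> r > 0"
    and rho_int: "set_integrable lborel {0<..}
                    (\<lambda>r. \<rho> r * min 1 (r\<^sup>2) * r ^ (DIM('a) - 1))"
    and gam_pos: "\<forall>r>0. gam \<rho> r > 0"
    and alpha0: "0 < \<alpha>0" "\<alpha>0 < 1"
    and rho_mom: "set_integrable lborel {1..} (\<lambda>r. r powr (real DIM('a) + \<alpha>0 - 1) * \<rho> r)"
    and tail: "Limsup at_infinity
                 (\<lambda>x::'a. ereal ((SUP z\<in>{z. norm z \<ge> norm x}. exp (- V z))
                        / (gam \<rho> (norm x) * norm x powr \<alpha>0))) = 0"
    and phi_smooth: "smooth \<phi>"
    and phi_ge: "\<forall>x. \<phi> x \<ge> 1"
    and phi_eq: "\<forall>x. norm x > 1 \<longrightarrow> \<phi> x = 1 + norm x powr \<alpha>0"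
  shows "(\<forall>x. set_integrable lborel {z. norm z > 1} (Lint \<rho> V \<phi> x))
       \<and> (\<forall>x. \<exists>e>0. bounded (hatL \<rho> V \<phi> ` ball x e))
       \<and> (\<exists>r0 C1 C2. r0 > 0 \<and> C1 > 0 \<and> C2 > 0 \<and>
            (\<forall>x. hatL \<rho> V \<phi> x \<le> - C1 * exp (V x) * gam \<rho> (norm x) * \<phi> x
                                   + C2 * indicator (ball 0 r0) x))"
proof -
  have "continuous_on UNIV \<phi>" using phi_smooth unfolding smooth_def by (metis Ck.simps(1))
  then interpret lyapunov_setting \<rho> V \<phi> \<alpha>0
    using assms by unfold_locales auto
  obtain b where b: "\<And>x. b \<le> norm x \<Longrightarrow> tail_sup x / (gam \<rho> (norm x) * norm x powr \<alpha>0) < tail_eps"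
    using Limsup_zero_eventually_less[OF tail tail_eps_pos] unfolding tail_sup_def by blast
  define r0 where "r0 = max (max b 2) ((2 * phi_max) powr (1 / \<alpha>0))"
  have far: "hatL \<rho> V \<phi> x \<le> - (core_mass / 16) * exp (V x) * gam \<rho> (norm x) * \<phi> x"
    if "r0 \<le> norm x" for x
  proof (rule hatL_far)
    have "((2 * phi_max) powr (1 / \<alpha>0)) powr \<alpha>0 \<le> norm x powr \<alpha>0"
      using that alpha0 by (intro powr_mono2) (auto simp: r0_def)
    thus "2 * phi_max \<le> norm x powr \<alpha>0" using alpha0 phi_max_ge_1 by (simp add: powr_powr)
    have "2 \<le> norm x" using that by (simp add: r0_def)
    then have "0 < norm x" by linarith
    thus "0 < gam \<rho> (norm x)" using gam_pos by blast
  qed (use that b in \<open>auto simp: r0_def\<close>)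
  obtain C2 where C2: "0 < C2" "\<And>x. x \<in> ball 0 r0 \<Longrightarrow>
      hatL \<rho> V \<phi> x \<le> - (core_mass / 16) * exp (V x) * gam \<rho> (norm x) * \<phi> x + C2"
    using hatL_near_origin[of "core_mass / 16" r0] core_mass_pos by auto
  have "\<forall>x. hatL \<rho> V \<phi> x \<le> - (core_mass / 16) * exp (V x) * gam \<rho> (norm x) * \<phi> x
                               + C2 * indicator (ball 0 r0) x"
    using far C2(2) by (auto simp: indicator_def not_less)
  moreover have "0 < r0" by (simp add: r0_def)
  ultimately have "\<exists>r0 C1 C2. r0 > 0 \<and> C1 > 0 \<and> C2 > 0 \<and>
            (\<forall>x. hatL \<rho> V \<phi> x \<le> - C1 * exp (V x) * gam \<rho> (norm x) * \<phi> x
                                   + C2 * indicator (ball 0 r0) x)"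
    using core_mass_pos C2(1) by (intro exI[of _ r0] exI[of _ "core_mass / 16"] exI[of _ C2]) auto
  thus ?thesis using Lint_set_integrable hatL_locally_bounded by blast
qed

end
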